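(* Assume the two-system setup with a steady-state map $x_2^s$ defined on all of $\mathbb{R}^{n_1}$, and let $(x_1^s,x_2^s(x_1^s))$ be a steady state. Assume $f_1,f_2$ are globally Lipschitz continuous and there exist symmetric positive definite matrices $P_1,Q_1\in\mathbb{R}^{n_1\times n_1}$, $P_2,Q_2\in\mathbb{R}^{n_2\times n_2}$ such that for all $x_1,x_2$: $$P_1\nabla_{x_1}f_1^r(x_1)+\nabla_{x_1}f_1^r(x_1)^TP_1\preceq -Q_1,\qquad P_2\nabla_{x_2}f_2(x_1,x_2)+\nabla_{x_2}f_2(x_1,x_2)^TP_2\preceq -Q_2.$$ Then $(x_1^s,x_2^s(x_1^s))$ is a globally exponentially stable equilibrium of the predictive-sensitivity system. Moreover, the time-scale separated system is globally exponentially stable in the sense that $x_1^s$ is a globally exponentially stable equilibrium of $\dot x_1=f_1^r(x_1)$ and, for every fixed $x_1$, $x_2^s(x_1)$ is a globally exponentially stable equilibrium of $\dot x_2=f_2(x_1,x_2)$.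
   Context: Two-system setup: Let $f_1:\mathbb{R}^{n_1}\times\mathbb{R}^{n_2}\to\mathbb{R}^{n_1}$ and $f_2:\mathbb{R}^{n_1}\times\mathbb{R}^{n_2}\to\mathbb{R}^{n_2}$ be continuously differentiable, and assume $\nabla_{x_2}f_2(x_1,x_2)$ is invertible for all $(x_1,x_2)$. Define the extended sensitivity $S_{x_1}^{x_2}(x_1,x_2):=-\nabla_{x_2}f_2(x_1,x_2)^{-1}\nabla_{x_1}f_2(x_1,x_2)\in\mathbb{R}^{n_2\times n_1}$. The predictive-sensitivity system is $$\begin{bmatrix} I&0\\ -S_{x_1}^{x_2}(x_1,x_2)&I\end{bmatrix}\begin{bmatrix}\dot x_1\\ \dot x_2\end{bmatrix}=\begin{bmatrix}f_1(x_1,x_2)\\ f_2(x_1,x_2)\end{bmatrix},$$ i.e. $\dot x_1=f_1(x_1,x_2)$, $\dot x_2=f_2(x_1,x_2)+S_{x_1}^{x_2}(x_1,x_2)f_1(x_1,x_2)$; it is assumed that this right-hand side is locally Lipschitz continuous. A steady-state map is a continuously differentiable map $x_2^s$ defined on an open set $U\subseteq\mathbb{R}^{n_1}$ with $f_2(x_1,x_2^s(x_1))=0$ for all $x_1\in U$ (then $\nabla_{x_1}x_2^s(x_1)=S_{x_1}^{x_2}(x_1,x_2^s(x_1))$). The reduced vector field is $f_1^r(x_1):=f_1(x_1,x_2^s(x_1))$, with Jacobian $\nabla_{x_1}f_1^r(x_1)=\nabla_{x_1}f_1(x_1,x_2^s(x_1))+\nabla_{x_2}f_1(x_1,x_2^s(x_1))\nabla_{x_1}x_2^s(x_1)$.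 A steady state is a point $(x_1^s,x_2^s(x_1^s))$ with $f_1^r(x_1^s)=0$. *)

theory Defs
  imports "HOL-Analysis.Analysis"
begin

definition mat_le :: "real^'n^'n \<Rightarrow> real^'n^'n \<Rightarrow> bool" where
  "mat_le A B \<longleftrightarrow> (\<forall>v. v \<bullet> (A *v v) \<le> v \<bullet> (B *v v))"

definition sym_pos_def :: "real^'n^'n \<Rightarrow> bool" where
  "sym_pos_def P \<longleftrightarrow> transpose P = P \<and> (\<forall>v. v \<noteq> 0 \<longrightarrow> 0 < v \<bullet> (P *v v))"

definition ode_sol :: "('a::real_normed_vector \<Rightarrow> 'a) \<Rightarrow> (real \<Rightarrow> 'a) \<Rightarrow> bool" where
  "ode_sol F x \<longleftrightarrow> (\<forall>t\<ge>0. (x has_vector_derivative F (x t)) (at t within {0..}))"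

definition GES :: "('a::real_normed_vector \<Rightarrow> 'a) \<Rightarrow> 'a \<Rightarrow> bool" where
  "GES F xe \<longleftrightarrow> F xe = 0 \<and> (\<forall>x0. \<exists>x. ode_sol F x \<and> x 0 = x0) \<and>
     (\<exists>M>0. \<exists>lam>0. \<forall>x. ode_sol F x \<longrightarrow>
        (\<forall>t\<ge>0. norm (x t - xe) \<le> M * exp (- lam * t) * norm (x 0 - xe)))"

end

theory Submission
  imports Defs
begin

(* By the mean value theorem, the two matrix inequalities turn into one-sided Lipschitz
   (dissipativity) estimates in the metrics of P1 and P2, for the reduced field
   x1 |-> f1 x1 (x2s x1) and for each fast field f2 x1. Hence the P1- and P2-quadratic forms
   are exponentially decaying Lyapunov functions of the reduced and the fast subsystem.
   For the predictive-sensitivity system the sensitivity correction makes the residual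
   y = f2 x1 x2 obey y' = J22 y exactly, so
     V = |x1 - x1s|^2_P1 + kappa |f2 x1 x2|^2_P2
   decays exponentially once kappa is large: the coupling term f1 x1 x2 - f1 x1 (x2s x1) is
   bounded by a multiple of |f2 x1 x2|, because strong monotonicity of f2 in x2 gives
   |x2 - x2s x1| <= c |f2 x1 x2|. The same estimate bounds all trajectories a priori,
   which yields global existence for the merely locally Lipschitz system. *)

section \<open>Quadratic forms and dissipativity\<close>

lemma inner_matrix_vector_sym:
  "transpose P = P \<Longrightarrow> (u::real^'n) \<bullet> (P *v w) = w \<bullet> (P *v u)"
  by (metis dot_lmul_matrix inner_commute transpose_matrix_vector)

lemma has_real_derivative_quadratic_form:
  fixes x :: "real \<Rightarrow> real^'n"
  assumes P: "transpose P = P" and x: "(x has_vector_derivative x') (at t within s)"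
  shows "((\<lambda>t. (x t - e) \<bullet> (P *v (x t - e))) has_real_derivative
            2 * ((x t - e) \<bullet> (P *v x'))) (at t within s)"
proof -
  have lin: "bounded_linear (\<lambda>v. P *v (v::real^'n))"
    by (rule matrix_vector_mul_bounded_linear)
  have x_e: "((\<lambda>t. x t - e) has_vector_derivative x') (at t within s)"
    using x by (auto intro!: derivative_eq_intros)
  then have dx: "((\<lambda>t. x t - e) has_derivative (\<lambda>h. h *\<^sub>R x')) (at t within s)"
    by (simp add: has_vector_derivative_def)
  from x_e have "((\<lambda>t. P *v (x t - e)) has_vector_derivative P *v x') (at t within s)"
    by (rule bounded_linear.has_vector_derivative[OF lin])
  then have dPx: "((\<lambda>t. P *v (x t - e)) has_derivative (\<lambda>h. h *\<^sub>R (P *v x'))) (at t within s)"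
    by (simp add: has_vector_derivative_def)
  have sym: "x' \<bullet> (P *v (x t - e)) = (x t - e) \<bullet> (P *v x')"
    using inner_matrix_vector_sym[OF P] by simp
  show ?thesis
    unfolding has_field_derivative_def
    by (intro has_derivative_eq_rhs[OF has_derivative_inner[OF dx dPx]])
      (simp only: fun_eq_iff inner_scaleR_left inner_scaleR_right sym, simp)
qed

lemma sym_pos_def_quadratic_lower_bound:
  assumes "sym_pos_def (P::real^'n^'n)"
  obtains m where "m > 0" "\<And>v. m * (norm v)\<^sup>2 \<le> v \<bullet> (P *v v)"
proof -
  have pos: "\<And>v. v \<noteq> 0 \<Longrightarrow> 0 < v \<bullet> (P *v v)"
    using assms by (simp add: sym_pos_def_def)
  have "continuous_on (sphere 0 1) (\<lambda>v::real^'n. v \<bullet> (P *v v))"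
    by (intro continuous_intros linear_continuous_on matrix_vector_mul_bounded_linear)
  moreover have "sphere (0::real^'n) 1 \<noteq> {}" by simp
  ultimately obtain u where u: "u \<in> sphere 0 1"
    and umin: "\<And>w. w \<in> sphere 0 1 \<Longrightarrow> u \<bullet> (P *v u) \<le> w \<bullet> (P *v w)"
    using continuous_attains_inf[OF compact_sphere] by blast
  define m where "m = u \<bullet> (P *v u)"
  have "u \<noteq> 0" using u by auto
  then have "0 < m" unfolding m_def by (rule pos)
  moreover have "m * (norm v)\<^sup>2 \<le> v \<bullet> (P *v v)" for v
  proof (cases "v = 0")
    case False
    define w where "w = (1 / norm v) *\<^sub>R v"
    have "m \<le> w \<bullet> (P *v w)" using umin[of w] False by (simp add: m_def w_def)
    also have "w \<bullet> (P *v w) = (v \<bullet> (P *v v)) / (norm v)\<^sup>2"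
      by (simp add: w_def matrix_vector_mult_scaleR power2_eq_square)
    finally show ?thesis using False by (simp add: field_simps)
  qed simp
  ultimately show thesis by (rule that)
qed

lemma bilinear_form_bound:
  obtains p where "p > 0" "\<And>u v. \<bar>u \<bullet> ((P::real^'n^'m) *v v)\<bar> \<le> p * norm u * norm v"
proof -
  obtain B where B: "B > 0" "\<And>v. norm (P *v v) \<le> norm v * B"
    using bounded_linear.pos_bounded[OF matrix_vector_mul_bounded_linear] by blast
  have "\<bar>u \<bullet> (P *v v)\<bar> \<le> B * norm u * norm v" for u v
  proof -
    have "\<bar>u \<bullet> (P *v v)\<bar> \<le> norm u * norm (P *v v)" by (rule Cauchy_Schwarz_ineq2)
    also have "\<dots> \<le> norm u * (norm v * B)" using B(2) by (simp add: mult_left_mono)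
    finally show ?thesis by (simp add: algebra_simps)
  qed
  with B(1) that show thesis by blast
qed

lemma two_mult_le_weighted_squares:
  fixes x y e :: real
  assumes "e > 0"
  shows "2 * x * y \<le> e * x\<^sup>2 + y\<^sup>2 / e"
proof -
  have "0 \<le> (e * x - y)\<^sup>2 / e" using assms by simp
  then show ?thesis using assms by (simp add: power2_eq_square field_simps)
qed

lemma quadratic_form_le_if_norm_le:
  assumes "\<And>u v. \<bar>u \<bullet> (P *v v)\<bar> \<le> p * norm u * norm v" "0 \<le> p" "norm v \<le> N"
  shows "v \<bullet> (P *v v) \<le> p * N\<^sup>2"
proof -
  have "v \<bullet> (P *v v) \<le> p * (norm v)\<^sup>2"
    using assms(1)[of v v] by (simp add: power2_eq_square)
  also have "\<dots> \<le> p * N\<^sup>2"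
    using assms(2,3) by (intro mult_left_mono power_mono) auto
  finally show ?thesis .
qed

lemma mat_le_imp_dissipative:
  assumes "mat_le (P ** J + transpose J ** P) (- Q)" "transpose P = P"
    and Q: "\<And>v. q * (norm v)\<^sup>2 \<le> v \<bullet> (Q *v v)"
  shows "v \<bullet> (P *v (J *v v)) \<le> - (q/2) * (norm (v::real^'n))\<^sup>2"
proof -
  have "v \<bullet> ((transpose J ** P) *v v) = (J *v v) \<bullet> (P *v v)"
    by (metis dot_lmul_matrix inner_commute matrix_vector_mul_assoc transpose_matrix_vector)
  also have "\<dots> = v \<bullet> (P *v (J *v v))"
    using inner_matrix_vector_sym[OF assms(2)] by (simp add: inner_commute)
  finally have "v \<bullet> ((P ** J + transpose J ** P) *v v) = 2 * (v \<bullet> (P *v (J *v v)))"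
    by (simp add: matrix_vector_mult_add_rdistrib inner_add_right matrix_vector_mul_assoc)
  moreover have "v \<bullet> ((- Q) *v v) = - (v \<bullet> (Q *v v))"
    using matrix_vector_mult_diff_rdistrib[of 0 Q v] by simp
  ultimately have "2 * (v \<bullet> (P *v (J *v v))) \<le> - (v \<bullet> (Q *v v))"
    using assms(1) unfolding mat_le_def by metis
  then show ?thesis using Q[of v] by linarith
qed

lemma dissipative_if_jacobian_dissipative:
  fixes G :: "real^'n \<Rightarrow> real^'n" and D :: "real^'n \<Rightarrow> real^'n^'n"
  assumes G: "\<And>z. (G has_derivative (\<lambda>h. D z *v h)) (at z)"
    and D: "\<And>z v. v \<bullet> (P *v (D z *v v)) \<le> - k * (norm v)\<^sup>2"
  shows "(b - b') \<bullet> (P *v (G b - G b')) \<le> - k * (norm (b - b'))\<^sup>2"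
proof -
  define d where "d = b - b'"
  define \<phi> where "\<phi> s = d \<bullet> (P *v G (b' + s *\<^sub>R d))" for s :: real
  have lin: "bounded_linear (\<lambda>v. d \<bullet> (P *v (v::real^'n)))"
    by (intro bounded_linear_compose[OF bounded_linear_inner_right]
        matrix_vector_mul_bounded_linear)
  have deriv: "DERIV \<phi> s :> d \<bullet> (P *v (D (b' + s *\<^sub>R d) *v d))" for s
  proof -
    have "((\<lambda>s. b' + s *\<^sub>R d) has_derivative (\<lambda>h. h *\<^sub>R d)) (at s)"
      by (auto intro!: derivative_eq_intros)
    from diff_chain_at[OF diff_chain_at[OF this G]
        bounded_linear.has_derivative[OF lin has_derivative_ident]]
    have "(((\<lambda>v. d \<bullet> (P *v v)) \<circ> (G \<circ> (\<lambda>s. b' + s *\<^sub>R d))) has_derivative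
        (*) (d \<bullet> (P *v (D (b' + s *\<^sub>R d) *v d)))) (at s)"
      by (rule has_derivative_eq_rhs) (auto simp: fun_eq_iff matrix_vector_mult_scaleR)
    moreover have "\<phi> = (\<lambda>v. d \<bullet> (P *v v)) \<circ> (G \<circ> (\<lambda>s. b' + s *\<^sub>R d))"
      by (auto simp: \<phi>_def fun_eq_iff)
    ultimately show ?thesis
      by (simp only: has_field_derivative_def)
  qed
  then obtain z where "\<phi> 1 - \<phi> 0 = d \<bullet> (P *v (D (b' + z *\<^sub>R d) *v d))"
    using MVT2[of 0 1 \<phi>, OF _ deriv] by auto
  moreover have "\<phi> 1 - \<phi> 0 = d \<bullet> (P *v (G b - G b'))"
    by (simp add: \<phi>_def d_def matrix_vector_mult_diff_distrib inner_diff_right)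
  ultimately show ?thesis using D[where z="b' + z *\<^sub>R d" and v=d] by (simp add: d_def)
qed

lemma dissipative_imp_inverse_lipschitz:
  assumes diss: "(b - b') \<bullet> (P *v (G b - G b')) \<le> - k * (norm (b - b'))\<^sup>2"
    and bound: "\<And>u v. \<bar>u \<bullet> (P *v v)\<bar> \<le> p * norm u * norm v"
  shows "k * norm (b - b') \<le> p * norm (G b - G b')"
proof (cases "b = b'")
  case False
  have "k * norm (b - b') * norm (b - b') \<le> - ((b - b') \<bullet> (P *v (G b - G b')))"
    using diss by (simp add: power2_eq_square)
  also have "\<dots> \<le> p * norm (G b - G b') * norm (b - b')"
    using bound[of "b - b'" "G b - G b'"] by (simp add: algebra_simps)
  finally show ?thesis using False by simp
qed simp

section \<open>Global solutions of autonomous equations\<close>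

definition sol_on :: "('a::real_normed_vector \<Rightarrow> 'a) \<Rightarrow> real \<Rightarrow> (real \<Rightarrow> 'a) \<Rightarrow> bool" where
  "sol_on F T y \<longleftrightarrow> (\<forall>t\<in>{0..T}. (y has_vector_derivative F (y t)) (at t within {0..T}))"

lemma ode_sol_imp_sol_on: "ode_sol F x \<Longrightarrow> sol_on F T x"
  unfolding ode_sol_def sol_on_def
  by (metis atLeastAtMost_iff atLeast_iff has_vector_derivative_within_subset subsetI)

lemma sol_on_cong:
  assumes "sol_on F T y" "\<And>s. s \<in> {0..T} \<Longrightarrow> F (y s) = G (y s)"
  shows "sol_on G T y"
  using assms unfolding sol_on_def by metis

lemma ode_sol_cong:
  assumes "ode_sol F y" "\<And>t. 0 \<le> t \<Longrightarrow> F (y t) = G (y t)"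
  shows "ode_sol G y"
  using assms unfolding ode_sol_def by metis

lemma sol_on_continuous_on: "sol_on F T y \<Longrightarrow> continuous_on {0..T} y"
  unfolding sol_on_def continuous_on_eq_continuous_within
  using has_vector_derivative_continuous by blast

lemma exp_weighted_integral_bound:
  fixes H :: "real \<Rightarrow> 'a::euclidean_space"
  assumes K: "K > 0" and AB: "0 \<le> A" "0 \<le> B"
    and H: "continuous_on {0..u} H"
    and le: "\<And>s. s \<in> {0..u} \<Longrightarrow> norm (H s) \<le> A + B * exp (K * s)"
  shows "exp (- K * u) * norm (integral {0..u} H) \<le> (A + B) / K"
proof (cases "0 \<le> u")
  case u: True
  have "((\<lambda>s. A + B * exp (K * s)) has_integral
      (A * u + B * exp (K * u) / K - (A * 0 + B * exp (K * 0) / K))) {0..u}"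
    using K u by (intro fundamental_theorem_of_calculus)
      (auto intro!: derivative_eq_intros simp flip: has_real_derivative_iff_has_vector_derivative)
  then have "norm (integral {0..u} H) \<le> A * u + B * exp (K * u) / K - B / K"
    using integral_norm_bound_integral[OF integrable_continuous_real[OF H] _ le]
    by (simp add: has_integral_iff)
  then have "exp (- K * u) * norm (integral {0..u} H)
      \<le> exp (- K * u) * (A * u + B * exp (K * u) / K - B / K)"
    by (rule mult_left_mono) simp
  also have "\<dots> = A * (u * exp (- K * u)) + B * (1 - exp (- K * u)) / K"
    using K by (simp add: field_simps flip: exp_add)
  also have "\<dots> \<le> A * (1 / K) + B * 1 / K"
  proof (intro add_mono mult_left_mono divide_right_mono AB)
    have "K * u \<le> exp (K * u)" using exp_ge_add_one_self[of "K * u"] by linarith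
    then have "K * u * exp (- K * u) \<le> exp (K * u) * exp (- K * u)"
      by (rule mult_right_mono) simp
    then show "u * exp (- K * u) \<le> 1 / K"
      using K by (simp add: field_simps flip: exp_add)
  qed (use K in auto)
  finally show ?thesis by (simp add: add_divide_distrib)
qed (use K AB in simp)

lemma has_vector_derivative_integral_Ici:
  fixes f :: "real \<Rightarrow> 'a::banach"
  assumes f: "continuous_on UNIV f" and t: "0 \<le> t"
  shows "((\<lambda>u. integral {0..u} f) has_vector_derivative f t) (at t within {0..})"
proof -
  have "((\<lambda>u. integral {0..u} f) has_vector_derivative f t) (at t within {0..t+1})"
    using t by (intro integral_has_vector_derivative continuous_on_subset[OF f]) auto
  moreover have "at t within {0..t+1} = at t within {0..}"
    by (rule at_within_nhd[where S="{..<t+1}"]) auto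
  ultimately show ?thesis by simp
qed

lemma continuous_on_integral_from_0:
  fixes f :: "real \<Rightarrow> 'a::banach"
  assumes f: "continuous_on UNIV f"
  shows "continuous_on UNIV (\<lambda>u. integral {0..u} f)"
proof -
  have "continuous_on {0..} (\<lambda>u. integral {0..u} f)"
    unfolding continuous_on_eq_continuous_within
    using has_vector_derivative_integral_Ici[OF f] has_vector_derivative_continuous
    by (metis atLeast_iff)
  then have "continuous_on UNIV (\<lambda>u. if u \<le> 0 then 0 else integral {0..u} f)"
    by (intro continuous_on_cases_le[where h="\<lambda>u. u"]) (auto simp: atLeast_def)
  moreover have "(if u \<le> 0 then 0 else integral {0..u} f) = integral {0..u} f" for u
    by (cases u "0::real" rule: linorder_cases) auto
  ultimately show ?thesis by simp
qed

lemma ode_sol_if_integral_equation: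
  fixes F :: "'a::euclidean_space \<Rightarrow> 'a"
  assumes cont: "continuous_on UNIV (\<lambda>s. F (x s))"
    and eq: "\<And>t. 0 \<le> t \<Longrightarrow> x t = x0 + integral {0..t} (\<lambda>s. F (x s))"
  shows "ode_sol F x"
  unfolding ode_sol_def
proof (intro allI impI)
  fix t :: real assume t: "0 \<le> t"
  have "((\<lambda>u. x0 + integral {0..u} (\<lambda>s. F (x s))) has_vector_derivative F (x t))
      (at t within {0..})"
    using has_vector_derivative_integral_Ici[OF cont t] by (auto intro!: derivative_eq_intros)
  then show "(x has_vector_derivative F (x t)) (at t within {0..})"
    by (rule has_vector_derivative_transform_within[where d=1]) (use t eq in auto)
qed

text \<open>The Picard operator in the variable \<open>g t = exp (- K t) (x t - x0)\<close> (Bielecki's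
  weighting), which makes it a contraction of the sup norm for \<open>K > L\<close>.\<close>

definition bielecki_picard :: "('a::euclidean_space \<Rightarrow> 'a) \<Rightarrow> real \<Rightarrow> 'a \<Rightarrow> (real \<Rightarrow>\<^sub>C 'a) \<Rightarrow> real \<Rightarrow> 'a"
  where "bielecki_picard F K x0 g t =
    exp (- K * t) *\<^sub>R integral {0..t} (\<lambda>s. F (x0 + exp (K * s) *\<^sub>R apply_bcontfun g s))"

lemma continuous_on_bielecki_integrand:
  fixes F :: "'a::euclidean_space \<Rightarrow> 'b::real_normed_vector" and g :: "real \<Rightarrow>\<^sub>C 'a"
  assumes "L-lipschitz_on UNIV F"
  shows "continuous_on UNIV (\<lambda>s. F (x0 + exp (K * s) *\<^sub>R apply_bcontfun g s))"
  by (rule continuous_on_compose2[OF lipschitz_on_continuous_on[OF assms]])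
    (auto intro!: continuous_intros continuous_on_apply_bcontfun)

lemma bielecki_picard_bcontfun:
  assumes lip: "L-lipschitz_on UNIV F" and K: "K > 0"
  shows "bielecki_picard F K x0 g \<in> bcontfun"
proof -
  have L: "0 \<le> L" by (rule lipschitz_on_nonneg[OF lip])
  have "norm (F (x0 + exp (K * s) *\<^sub>R apply_bcontfun g s))
      \<le> norm (F x0) + L * norm g * exp (K * s)" for s
  proof -
    have "norm (F (x0 + exp (K * s) *\<^sub>R apply_bcontfun g s) - F x0)
        \<le> L * (exp (K * s) * norm (apply_bcontfun g s))"
      using lipschitz_on_normD[OF lip, of "x0 + exp (K * s) *\<^sub>R apply_bcontfun g s" x0] by simp
    also have "\<dots> \<le> L * (exp (K * s) * norm g)"
      using L by (intro mult_left_mono norm_bounded) auto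
    finally show ?thesis
      using norm_triangle_sub[of "F (x0 + exp (K * s) *\<^sub>R apply_bcontfun g s)" "F x0"]
      by (simp add: mult_ac)
  qed
  then have "exp (- K * t) * norm (integral {0..t} (\<lambda>s. F (x0 + exp (K * s) *\<^sub>R apply_bcontfun g s)))
      \<le> (norm (F x0) + L * norm g) / K" for t
    using L by (intro exp_weighted_integral_bound[OF K]
        continuous_on_subset[OF continuous_on_bielecki_integrand[OF lip]]) auto
  then have "norm (bielecki_picard F K x0 g t) \<le> (norm (F x0) + L * norm g) / K" for t
    by (simp add: bielecki_picard_def)
  then have "bounded (range (bielecki_picard F K x0 g))"
    unfolding bounded_iff by blast
  moreover have "continuous_on UNIV (bielecki_picard F K x0 g)"
    unfolding bielecki_picard_def
    by (intro continuous_intros continuous_on_integral_from_0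
        continuous_on_bielecki_integrand[OF lip])
  ultimately show ?thesis by (simp add: bcontfun_def)
qed

lemma bielecki_picard_contraction:
  assumes lip: "L-lipschitz_on UNIV F" and K: "K > 0"
  shows "norm (bielecki_picard F K x0 g t - bielecki_picard F K x0 h t) \<le> L / K * dist g h"
proof -
  have L: "0 \<le> L" by (rule lipschitz_on_nonneg[OF lip])
  define X where "X g s = x0 + exp (K * s) *\<^sub>R apply_bcontfun g s" for g s
  have int: "(\<lambda>s. F (X g s)) integrable_on {0..t}" for g
    unfolding X_def by (intro integrable_continuous_real continuous_on_subset
        [OF continuous_on_bielecki_integrand[OF lip]]) simp
  have "norm (F (X g s) - F (X h s)) \<le> 0 + L * dist g h * exp (K * s)" for s
  proof -
    have "norm (F (X g s) - F (X h s)) \<le> L * norm (X g s - X h s)"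
      using lipschitz_on_normD[OF lip, of "X g s" "X h s"] by simp
    also have "\<dots> \<le> L * (dist g h * exp (K * s))"
      using dist_bounded[of g s h] L
      by (intro mult_left_mono) (simp_all add: X_def dist_norm flip: scaleR_diff_right)
    finally show ?thesis by (simp add: mult.assoc)
  qed
  then have "exp (- K * t) * norm (integral {0..t} (\<lambda>s. F (X g s) - F (X h s)))
      \<le> (0 + L * dist g h) / K"
    using L unfolding X_def
    by (intro exp_weighted_integral_bound[OF K]) (auto intro!: continuous_intros
        continuous_on_subset[OF continuous_on_bielecki_integrand[OF lip]])
  moreover have "bielecki_picard F K x0 g t - bielecki_picard F K x0 h t
      = exp (- K * t) *\<^sub>R integral {0..t} (\<lambda>s. F (X g s) - F (X h s))"
    unfolding bielecki_picard_def X_def[symmetric]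
    by (simp add: integral_diff[OF int int] scaleR_diff_right)
  ultimately show ?thesis by simp
qed

lemma lipschitz_ode_solution_exists:
  fixes F :: "'a::euclidean_space \<Rightarrow> 'a"
  assumes lip: "L-lipschitz_on UNIV F"
  obtains x where "ode_sol F x" "x 0 = x0"
proof -
  have L: "0 \<le> L" by (rule lipschitz_on_nonneg[OF lip])
  define K where "K = 2 * L + 1"
  have K: "K > 0" using L by (simp add: K_def)
  define T where "T g = Bcontfun (bielecki_picard F K x0 g)" for g
  have T_apply: "apply_bcontfun (T g) = bielecki_picard F K x0 g" for g
    by (simp add: T_def Bcontfun_inverse[OF bielecki_picard_bcontfun[OF lip K]])
  have "dist (T g) (T h) \<le> (1/2) * dist g h" for g h
  proof (rule dist_bound)
    fix t
    have "L / K * dist g h \<le> (1/2) * dist g h"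
      using K L by (intro mult_right_mono) (simp_all add: K_def field_simps)
    then show "dist (apply_bcontfun (T g) t) (apply_bcontfun (T h) t) \<le> (1/2) * dist g h"
      unfolding T_apply dist_norm[of "bielecki_picard F K x0 g t"]
      by (rule order_trans[OF bielecki_picard_contraction[OF lip K]])
  qed
  then obtain g where "T g = g"
    using banach_fix_type[of "1/2" T] by auto
  then have g: "apply_bcontfun g t = bielecki_picard F K x0 g t" for t
    using T_apply by metis
  define x where "x t = x0 + exp (K * t) *\<^sub>R apply_bcontfun g t" for t
  have x_eq: "x t = x0 + integral {0..t} (\<lambda>s. F (x s))" for t
  proof -
    have "x t = x0 + exp (K * t) *\<^sub>R bielecki_picard F K x0 g t"
      by (simp only: x_def g[of t])
    also have "\<dots> = x0 + integral {0..t} (\<lambda>s. F (x s))"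
      by (simp add: bielecki_picard_def x_def flip: exp_add)
    finally show ?thesis .
  qed
  show thesis
  proof
    show "ode_sol F x"
      by (rule ode_sol_if_integral_equation[OF _ x_eq])
        (simp add: x_def continuous_on_bielecki_integrand[OF lip])
    show "x 0 = x0" using x_eq[of 0] by simp
  qed
qed

lemma lipschitz_on_compact_if_locally_lipschitz:
  fixes F :: "'a::euclidean_space \<Rightarrow> 'b::euclidean_space"
  assumes loc: "\<forall>z. \<exists>e>0. \<exists>L. L-lipschitz_on (ball z e) F" and X: "compact X"
  obtains L where "L-lipschitz_on X F"
proof -
  have loc': "local_lipschitz {0::real} X (\<lambda>_. F)"
  proof (rule local_lipschitzI)
    fix t x assume "t \<in> {0::real}" "x \<in> X"
    obtain e L where e: "e > 0" and L: "L-lipschitz_on (ball x e) F" using loc by blast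
    have "L-lipschitz_on (cball x (e/2) \<inter> X) F"
      by (rule lipschitz_on_subset[OF L]) (use e in auto)
    then show "\<exists>u>0. \<exists>L. \<forall>t\<in>cball t u \<inter> {0}. L-lipschitz_on (cball x u \<inter> X) F"
      using e by (intro exI[of _ "e/2"]) auto
  qed
  obtain L where "\<And>t. t \<in> {0::real} \<Longrightarrow> L-lipschitz_on X ((\<lambda>_. F) t)"
    using local_lipschitz_compact_implies_lipschitz[OF loc' X compact_sing] by auto
  then show thesis using that by blast
qed

lemma first_exit_time:
  fixes x :: "real \<Rightarrow> 'a::real_normed_vector"
  assumes x: "continuous_on {0..t} x" and "0 \<le> t"
    and start: "norm (x 0) < \<rho>" and exit: "\<rho> \<le> norm (x t)"
  obtains T where "0 < T" "T \<le> t" "norm (x T) = \<rho>" "\<And>s. s \<in> {0..T} \<Longrightarrow> norm (x s) \<le> \<rho>"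
proof -
  define A where "A = {s \<in> {0..t}. \<rho> \<le> norm (x s)}"
  have "closed A" unfolding A_def
    by (rule continuous_on_closed_Collect_le) (auto intro!: continuous_intros x)
  moreover have "t \<in> A" using \<open>0 \<le> t\<close> exit by (simp add: A_def)
  moreover have "bdd_below A" by (auto simp: A_def bdd_below_def)
  ultimately have "Inf A \<in> A" using closed_contains_Inf by blast
  define T where "T = Inf A"
  have T: "0 \<le> T" "T \<le> t" "\<rho> \<le> norm (x T)"
    using \<open>Inf A \<in> A\<close> by (auto simp: A_def T_def)
  have "T \<noteq> 0" using start T(3) by auto
  with T(1) have "0 < T" by simp
  have "norm (x s) < \<rho>" if "0 \<le> s" "s < T" for s
    using cInf_lower[OF _ \<open>bdd_below A\<close>, of s] that T(2) by (force simp: A_def T_def)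
  then have "{0..<T} \<subseteq> {s \<in> {0..T}. norm (x s) \<le> \<rho>}" by force
  moreover have "continuous_on {0..T} x"
    using T(2) by (auto intro: continuous_on_subset[OF x])
  then have "closed {s \<in> {0..T}. norm (x s) \<le> \<rho>}"
    by (intro continuous_on_closed_Collect_le continuous_on_norm continuous_on_const) simp_all
  ultimately have "closure {0..<T} \<subseteq> {s \<in> {0..T}. norm (x s) \<le> \<rho>}"
    by (rule closure_minimal)
  then have below: "norm (x s) \<le> \<rho>" if "s \<in> {0..T}" for s
    using closure_atLeastLessThan[OF \<open>0 < T\<close>] that by auto
  show thesis
  proof (rule that[OF \<open>0 < T\<close> T(2) _ below])
    show "norm (x T) = \<rho>" using below[of T] T(1,3) by simp
  qed
qed

lemma lipschitz_on_closest_point_comp: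
  assumes L: "L-lipschitz_on C F" and C: "convex C" "closed C" "C \<noteq> {}"
  shows "L-lipschitz_on UNIV (\<lambda>z. F (closest_point C z))"
proof (rule lipschitz_onI)
  fix a b :: 'a
  have "dist (F (closest_point C a)) (F (closest_point C b))
      \<le> L * dist (closest_point C a) (closest_point C b)"
    by (rule lipschitz_onD[OF L]) (use C closest_point_in_set in auto)
  also have "\<dots> \<le> L * dist a b"
    by (rule mult_left_mono[OF closest_point_lipschitz[OF C] lipschitz_on_nonneg[OF L]])
  finally show "dist (F (closest_point C a)) (F (closest_point C b)) \<le> L * dist a b" .
qed (rule lipschitz_on_nonneg[OF L])

text \<open>The field is truncated outside a ball containing all a priori bounded trajectories,
  using the (non-expansive) closest-point projection; the solution of the truncated,
  globally Lipschitz system never reaches the truncation region.\<close>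

lemma ode_solution_exists_if_bounded:
  fixes F :: "'a::euclidean_space \<Rightarrow> 'a"
  assumes loc: "\<forall>z. \<exists>e>0. \<exists>L. L-lipschitz_on (ball z e) F"
    and bound: "\<And>T y. 0 \<le> T \<Longrightarrow> sol_on F T y \<Longrightarrow> y 0 = x0 \<Longrightarrow> \<forall>t\<in>{0..T}. norm (y t) \<le> R"
  obtains x where "ode_sol F x" "x 0 = x0"
proof -
  define R0 where "R0 = max R (norm x0)"
  define C where "C = cball (0::'a) (R0 + 1)"
  have R0: "norm x0 \<le> R0" "R \<le> R0" by (simp_all add: R0_def)
  have "0 \<le> R0" using R0(1) norm_ge_zero[of x0] by linarith
  then have C: "convex C" "closed C" "C \<noteq> {}" by (auto simp: C_def)
  obtain L where L: "L-lipschitz_on C F"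
    using lipschitz_on_compact_if_locally_lipschitz[OF loc compact_cball] unfolding C_def .
  define FR where "FR z = F (closest_point C z)" for z
  obtain x where x: "ode_sol FR x" "x 0 = x0"
    using lipschitz_ode_solution_exists[OF lipschitz_on_closest_point_comp[OF L C]]
    unfolding FR_def[abs_def] by blast
  have FR_eq: "FR z = F z" if "norm z \<le> R0 + 1" for z
    using that by (simp add: FR_def C_def closest_point_self)
  have x_sol_on: "sol_on FR T x" for T
    by (rule ode_sol_imp_sol_on[OF x(1)])
  have bounded: "norm (x t) \<le> R0" if t: "0 \<le> t" for t
  proof (rule ccontr)
    assume "\<not> norm (x t) \<le> R0"
    define \<rho> where "\<rho> = min (norm (x t)) (R0 + 1)"
    have \<rho>: "norm (x 0) < \<rho>" "\<rho> \<le> norm (x t)" "R0 < \<rho>" "\<rho> \<le> R0 + 1"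
      using \<open>\<not> norm (x t) \<le> R0\<close> R0 x(2) by (auto simp: \<rho>_def)
    obtain T where T: "0 < T" "norm (x T) = \<rho>" "\<And>s. s \<in> {0..T} \<Longrightarrow> norm (x s) \<le> \<rho>"
      using first_exit_time[OF sol_on_continuous_on[OF x_sol_on] t \<rho>(1,2)] by metis
    have "sol_on F T x"
      using T(3) \<rho>(4) by (intro sol_on_cong[OF x_sol_on] FR_eq) force
    then have "norm (x T) \<le> R" using bound[of T x] x(2) T(1) by auto
    then show False using T(2) \<rho>(3) R0(2) by linarith
  qed
  have "ode_sol F x"
    using bounded by (intro ode_sol_cong[OF x(1)] FR_eq) force
  then show thesis using that x(2) by blast
qed

section \<open>Exponential stability from a quadratic Lyapunov function\<close>

lemma DERIV_le_neg_mult_imp_exp_decay: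
  fixes V V' :: "real \<Rightarrow> real"
  assumes "0 \<le> T"
    and deriv: "\<And>t. t \<in> {0..T} \<Longrightarrow> (V has_real_derivative V' t) (at t within {0..T})"
    and le: "\<And>t. t \<in> {0..T} \<Longrightarrow> V' t \<le> - c * V t"
    and t: "t \<in> {0..T}"
  shows "V t \<le> V 0 * exp (- c * t)"
proof -
  define h where "h s = V s * exp (c * s)" for s
  have dh: "(h has_real_derivative (V' s + c * V s) * exp (c * s)) (at s within {0..T})"
    if "s \<in> {0..T}" for s
    unfolding h_def using deriv[OF that]
    by (auto intro!: derivative_eq_intros simp: algebra_simps)
  have "h t \<le> h 0"
  proof (rule DERIV_nonpos_imp_decreasing_open[of 0 t h])
    show "0 \<le> t" using t by simp
    have "continuous_on {0..T} h"
      unfolding continuous_on_eq_continuous_within using dh DERIV_continuous by blast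
    then show "continuous_on {0..t} h" using t by (auto intro: continuous_on_subset)
    fix s assume s: "0 < s" "s < t"
    have "at s within {0..T} = at s" using s t by (intro at_within_Icc_at) auto
    moreover have "(V' s + c * V s) * exp (c * s) \<le> 0"
      using le[of s] s t by (intro mult_nonpos_nonneg) auto
    ultimately show "\<exists>y. DERIV h s :> y \<and> y \<le> 0" using dh[of s] s t by auto
  qed
  then have "V t * exp (c * t) * exp (- c * t) \<le> V 0 * exp (- c * t)"
    by (simp add: h_def)
  then show ?thesis by (simp add: mult.assoc flip: exp_add)
qed

lemma quadratic_Lyapunov_decay:
  fixes V V' :: "'a::real_normed_vector \<Rightarrow> real"
  assumes t: "t \<in> {0..T}" and a: "a > 0" and b: "0 \<le> b"
    and lower: "\<And>x. a * (norm (x - xe))\<^sup>2 \<le> V x"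
    and upper: "\<And>x. V x \<le> b * (norm (x - xe))\<^sup>2"
    and deriv: "\<And>s. s \<in> {0..T} \<Longrightarrow>
        ((\<lambda>t. V (y t)) has_real_derivative V' (y s)) (at s within {0..T})"
    and decrease: "\<And>x. V' x \<le> - c * V x"
  shows "norm (y t - xe) \<le> sqrt (b / a) * exp (- (c/2) * t) * norm (y 0 - xe)"
proof -
  have "0 \<le> T" using t by simp
  have "a * (norm (y t - xe))\<^sup>2 \<le> V (y t)" by (rule lower)
  also have "\<dots> \<le> V (y 0) * exp (- c * t)"
    using \<open>0 \<le> T\<close> t deriv decrease
    by (intro DERIV_le_neg_mult_imp_exp_decay[of T _ "\<lambda>s. V' (y s)"]) auto
  also have "\<dots> \<le> b * (norm (y 0 - xe))\<^sup>2 * exp (- c * t)"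
    by (rule mult_right_mono[OF upper]) simp
  finally have "(norm (y t - xe))\<^sup>2 \<le> b * (norm (y 0 - xe))\<^sup>2 * exp (- c * t) / a"
    using a by (simp add: pos_le_divide_eq ac_simps)
  also have "\<dots> = (sqrt (b / a))\<^sup>2 * (exp (- (c/2) * t))\<^sup>2 * (norm (y 0 - xe))\<^sup>2"
    using a b by (simp add: power2_eq_square flip: exp_add)
  also have "\<dots> = (sqrt (b / a) * exp (- (c/2) * t) * norm (y 0 - xe))\<^sup>2"
    by (simp only: power_mult_distrib)
  finally show ?thesis
    by (rule power2_le_imp_le) (use a b in simp)
qed

lemma GES_if_quadratic_Lyapunov:
  fixes F :: "'a::euclidean_space \<Rightarrow> 'a" and V V' :: "'a \<Rightarrow> real"
  assumes loc: "\<forall>z. \<exists>e>0. \<exists>L. L-lipschitz_on (ball z e) F"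
    and eq: "F xe = 0" and a: "a > 0" and c: "c > 0"
    and lower: "\<And>x. a * (norm (x - xe))\<^sup>2 \<le> V x"
    and upper: "\<And>x. V x \<le> b * (norm (x - xe))\<^sup>2"
    and deriv: "\<And>T y s. sol_on F T y \<Longrightarrow> s \<in> {0..T} \<Longrightarrow>
        ((\<lambda>t. V (y t)) has_real_derivative V' (y s)) (at s within {0..T})"
    and decrease: "\<And>x. V' x \<le> - c * V x"
  shows "GES F xe"
proof -
  define M where "M = sqrt (b / a)"
  obtain i :: 'a where "i \<in> Basis" by (meson ex_in_conv nonempty_Basis)
  then have "a \<le> b" using lower[of "xe + i"] upper[of "xe + i"] by simp
  then have M: "M > 0" using a by (simp add: M_def)
  have est: "norm (y t - xe) \<le> M * exp (- (c/2) * t) * norm (y 0 - xe)"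
    if "sol_on F T y" "t \<in> {0..T}" for T y t
    unfolding M_def
    by (rule quadratic_Lyapunov_decay[OF that(2) a _ lower upper deriv[OF that(1)] decrease])
      (use a \<open>a \<le> b\<close> in simp)
  have "\<exists>x. ode_sol F x \<and> x 0 = x0" for x0
  proof -
    have "\<forall>t\<in>{0..T}. norm (y t) \<le> norm xe + M * norm (x0 - xe)"
      if "0 \<le> T" "sol_on F T y" "y 0 = x0" for T y
    proof
      fix t assume t: "t \<in> {0..T}"
      have "exp (- (c/2) * t) \<le> 1" using c t by simp
      then have "M * exp (- (c/2) * t) \<le> M * 1" using M by (intro mult_left_mono) auto
      then have "M * exp (- (c/2) * t) * norm (y 0 - xe) \<le> M * 1 * norm (x0 - xe)"
        unfolding that(3)[symmetric] by (rule mult_right_mono) simp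
      then have "norm (y t - xe) \<le> M * norm (x0 - xe)"
        using est[OF that(2) t] by simp
      then show "norm (y t) \<le> norm xe + M * norm (x0 - xe)"
        using norm_triangle_sub[of "y t" xe] by simp
    qed
    then obtain x where "ode_sol F x" "x 0 = x0"
      using ode_solution_exists_if_bounded[OF loc] by blast
    then show ?thesis by blast
  qed
  moreover have "\<forall>y. ode_sol F y \<longrightarrow>
      (\<forall>t\<ge>0. norm (y t - xe) \<le> M * exp (- (c/2) * t) * norm (y 0 - xe))"
    using est[OF ode_sol_imp_sol_on] by (meson atLeastAtMost_iff order_refl)
  ultimately show ?thesis
    unfolding GES_def using eq M c by (intro conjI exI[of _ M] exI[of _ "c/2"]) auto
qed

lemma GES_if_dissipative:
  fixes F :: "real^'n \<Rightarrow> real^'n"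
  assumes lip: "L-lipschitz_on UNIV F" and eq: "F xe = 0"
    and P: "sym_pos_def P" and k: "k > 0"
    and diss: "\<And>z. (z - xe) \<bullet> (P *v F z) \<le> - k * (norm (z - xe))\<^sup>2"
  shows "GES F xe"
proof -
  obtain m where m: "m > 0" "\<And>v. m * (norm v)\<^sup>2 \<le> v \<bullet> (P *v v)"
    using sym_pos_def_quadratic_lower_bound[OF P] by blast
  obtain p where p: "p > 0" "\<And>u v. \<bar>u \<bullet> (P *v v)\<bar> \<le> p * norm u * norm v"
    using bilinear_form_bound by blast
  have upper: "v \<bullet> (P *v v) \<le> p * (norm v)\<^sup>2" for v
    using p by (intro quadratic_form_le_if_norm_le) auto
  show ?thesis
  proof (rule GES_if_quadratic_Lyapunov[where V="\<lambda>z. (z - xe) \<bullet> (P *v (z - xe))"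
        and V'="\<lambda>z. 2 * ((z - xe) \<bullet> (P *v F z))" and c="2 * k / p" and a=m])
    show "\<forall>z. \<exists>e>0. \<exists>L. L-lipschitz_on (ball z e) F"
      using lipschitz_on_subset[OF lip subset_UNIV] zero_less_one by blast
    show "((\<lambda>t. (y t - xe) \<bullet> (P *v (y t - xe))) has_real_derivative 2 * ((y s - xe) \<bullet> (P *v F (y s))))
        (at s within {0..T})" if "sol_on F T y" "s \<in> {0..T}" for T y s
      by (rule has_real_derivative_quadratic_form) (use P that in \<open>auto simp: sym_pos_def_def sol_on_def\<close>)
    show "2 * ((z - xe) \<bullet> (P *v F z)) \<le> - (2 * k / p) * ((z - xe) \<bullet> (P *v (z - xe)))" for z
    proof -
      have "(2 * k / p) * ((z - xe) \<bullet> (P *v (z - xe))) \<le> (2 * k / p) * (p * (norm (z - xe))\<^sup>2)"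
        using k p by (intro mult_left_mono upper) auto
      moreover have "(2 * k / p) * (p * (norm (z - xe))\<^sup>2) = 2 * k * (norm (z - xe))\<^sup>2"
        using p by simp
      ultimately show ?thesis using diss[of z] by linarith
    qed
  qed (use eq m upper k p in auto)
qed

section \<open>The predictive-sensitivity system\<close>

locale predictive_sensitivity =
  fixes f1 :: "real^'n1 \<Rightarrow> real^'n2 \<Rightarrow> real^'n1"
    and f2 :: "real^'n1 \<Rightarrow> real^'n2 \<Rightarrow> real^'n2"
    and J11 :: "real^'n1 \<Rightarrow> real^'n2 \<Rightarrow> real^'n1^'n1"
    and J12 :: "real^'n1 \<Rightarrow> real^'n2 \<Rightarrow> real^'n2^'n1"
    and J21 :: "real^'n1 \<Rightarrow> real^'n2 \<Rightarrow> real^'n1^'n2"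
    and J22 :: "real^'n1 \<Rightarrow> real^'n2 \<Rightarrow> real^'n2^'n2"
    and S :: "real^'n1 \<Rightarrow> real^'n2 \<Rightarrow> real^'n1^'n2"
    and x2s :: "real^'n1 \<Rightarrow> real^'n2"
    and Dx2s :: "real^'n1 \<Rightarrow> real^'n1^'n2"
    and x1s :: "real^'n1"
    and P1 Q1 :: "real^'n1^'n1"
    and P2 Q2 :: "real^'n2^'n2"
    and L1 L2 :: real
  assumes f1_deriv: "\<And>a b. ((\<lambda>z. f1 (fst z) (snd z)) has_derivative
              (\<lambda>h. J11 a b *v fst h + J12 a b *v snd h)) (at (a, b))"
    and f2_deriv: "\<And>a b. ((\<lambda>z. f2 (fst z) (snd z)) has_derivative
              (\<lambda>h. J21 a b *v fst h + J22 a b *v snd h)) (at (a, b))"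
    and J22_inv: "\<And>a b. invertible (J22 a b)"
    and S_def: "\<And>a b. S a b = - (matrix_inv (J22 a b) ** J21 a b)"
    and ps_loc_lip: "\<forall>z. \<exists>e>0. \<exists>L. L-lipschitz_on (ball z e)
          (\<lambda>w. (f1 (fst w) (snd w), f2 (fst w) (snd w) + S (fst w) (snd w) *v f1 (fst w) (snd w)))"
    and x2s_deriv: "\<And>a. (x2s has_derivative (\<lambda>h. Dx2s a *v h)) (at a)"
    and x2s_ss: "\<And>a. f2 a (x2s a) = 0"
    and steady: "f1 x1s (x2s x1s) = 0"
    and f1_lip: "L1-lipschitz_on UNIV (\<lambda>z. f1 (fst z) (snd z))"
    and f2_lip: "L2-lipschitz_on UNIV (\<lambda>z. f2 (fst z) (snd z))"
    and P1: "sym_pos_def P1" and Q1: "sym_pos_def Q1"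
    and P2: "sym_pos_def P2" and Q2: "sym_pos_def Q2"
    and LMI1: "\<And>a. mat_le
        (P1 ** (J11 a (x2s a) + J12 a (x2s a) ** Dx2s a)
         + transpose (J11 a (x2s a) + J12 a (x2s a) ** Dx2s a) ** P1) (- Q1)"
    and LMI2: "\<And>a b. mat_le (P2 ** J22 a b + transpose (J22 a b) ** P2) (- Q2)"
begin

lemma L1_nonneg: "0 \<le> L1" and L2_nonneg: "0 \<le> L2"
  using lipschitz_on_nonneg[OF f1_lip] lipschitz_on_nonneg[OF f2_lip] .

lemma f1_lipschitz: "norm (f1 a b - f1 a' b') \<le> L1 * norm (a - a', b - b')"
  using lipschitz_on_normD[OF f1_lip, of "(a, b)" "(a', b')"] by simp

lemma f2_lipschitz: "norm (f2 a b - f2 a' b') \<le> L2 * norm (a - a', b - b')"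
  using lipschitz_on_normD[OF f2_lip, of "(a, b)" "(a', b')"] by simp

lemma f2_lipschitz_snd: "norm (f2 a b - f2 a b') \<le> L2 * norm (b - b')"
  using f2_lipschitz[of a b a b'] by (simp add: norm_Pair)

lemma f2_has_derivative_snd: "(f2 a has_derivative (\<lambda>h. J22 a b *v h)) (at b)"
proof -
  have "(((\<lambda>z. f2 (fst z) (snd z)) \<circ> (\<lambda>b. (a, b))) has_derivative
      ((\<lambda>h. J21 a b *v fst h + J22 a b *v snd h) \<circ> (\<lambda>h. (0, h)))) (at b)"
    by (rule diff_chain_at) (auto intro!: derivative_eq_intros f2_deriv)
  then show ?thesis by (simp add: o_def)
qed

lemma reduced_has_derivative:
  "((\<lambda>a. f1 a (x2s a)) has_derivative
      (\<lambda>h. (J11 a (x2s a) + J12 a (x2s a) ** Dx2s a) *v h)) (at a)"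
proof -
  have "(((\<lambda>z. f1 (fst z) (snd z)) \<circ> (\<lambda>a. (a, x2s a))) has_derivative
      ((\<lambda>h. J11 a (x2s a) *v fst h + J12 a (x2s a) *v snd h) \<circ> (\<lambda>h. (h, Dx2s a *v h)))) (at a)"
    by (rule diff_chain_at) (auto intro!: derivative_eq_intros f1_deriv x2s_deriv)
  then show ?thesis
    by (simp add: o_def matrix_vector_mult_add_rdistrib matrix_vector_mul_assoc)
qed

lemma J22_dissipative:
  obtains k where "k > 0" "\<And>a b v. v \<bullet> (P2 *v (J22 a b *v v)) \<le> - k * (norm v)\<^sup>2"
proof -
  obtain q where q: "q > 0" "\<And>v. q * (norm v)\<^sup>2 \<le> v \<bullet> (Q2 *v v)"
    using sym_pos_def_quadratic_lower_bound[OF Q2] by blast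
  have "transpose P2 = P2" using P2 by (simp add: sym_pos_def_def)
  with q show thesis by (intro that[of "q/2"] mat_le_imp_dissipative[OF LMI2]) auto
qed

lemma f2_dissipative:
  assumes "\<And>a b v. v \<bullet> (P2 *v (J22 a b *v v)) \<le> - k * (norm v)\<^sup>2"
  shows "(b - b') \<bullet> (P2 *v (f2 a b - f2 a b')) \<le> - k * (norm (b - b'))\<^sup>2"
  by (rule dissipative_if_jacobian_dissipative[OF f2_has_derivative_snd assms])

lemma reduced_dissipative:
  obtains k where "k > 0" "\<And>a. (a - x1s) \<bullet> (P1 *v f1 a (x2s a)) \<le> - k * (norm (a - x1s))\<^sup>2"
proof -
  obtain q where q: "q > 0" "\<And>v. q * (norm v)\<^sup>2 \<le> v \<bullet> (Q1 *v v)"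
    using sym_pos_def_quadratic_lower_bound[OF Q1] by blast
  have P1s: "transpose P1 = P1" using P1 by (simp add: sym_pos_def_def)
  have "(a - x1s) \<bullet> (P1 *v (f1 a (x2s a) - f1 x1s (x2s x1s))) \<le> - (q/2) * (norm (a - x1s))\<^sup>2" for a
    by (rule dissipative_if_jacobian_dissipative[OF reduced_has_derivative
          mat_le_imp_dissipative[OF LMI1 P1s q(2)]])
  with q(1) steady show thesis by (intro that[of "q/2"]) simp_all
qed

lemma f2_inverse_lipschitz:
  obtains c where "c > 0" "\<And>a b b'. norm (b - b') \<le> c * norm (f2 a b - f2 a b')"
proof -
  obtain k where k: "k > 0" "\<And>a b v. v \<bullet> (P2 *v (J22 a b *v v)) \<le> - k * (norm v)\<^sup>2"
    using J22_dissipative by blast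
  obtain p where p: "p > 0" "\<And>u v. \<bar>u \<bullet> (P2 *v v)\<bar> \<le> p * norm u * norm v"
    using bilinear_form_bound by blast
  have "norm (b - b') \<le> (p / k) * norm (f2 a b - f2 a b')" for a b b'
  proof -
    have "k * norm (b - b') \<le> p * norm (f2 a b - f2 a b')"
      by (rule dissipative_imp_inverse_lipschitz[OF f2_dissipative[OF k(2)] p(2)])
    then show ?thesis using k(1) by (simp add: pos_le_divide_eq mult.commute)
  qed
  with k(1) p(1) show thesis by (intro that[of "p / k"]) simp_all
qed

lemma x2s_lipschitz:
  obtains L where "0 \<le> L" "\<And>a a'. norm (x2s a - x2s a') \<le> L * norm (a - a')"
proof -
  obtain c where c: "c > 0" "\<And>a b b'. norm (b - b') \<le> c * norm (f2 a b - f2 a b')"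
    using f2_inverse_lipschitz by blast
  have "norm (x2s a - x2s a') \<le> c * L2 * norm (a - a')" for a a'
  proof -
    have "norm (x2s a - x2s a') \<le> c * norm (f2 a' (x2s a) - f2 a (x2s a))"
      using c(2)[of "x2s a" "x2s a'" a'] x2s_ss by simp
    also have "\<dots> \<le> c * (L2 * norm (a - a'))"
      using f2_lipschitz[of a' "x2s a" a "x2s a"] c(1)
      by (intro mult_left_mono) (simp_all add: norm_minus_commute)
    finally show ?thesis by (simp add: mult.assoc)
  qed
  with c(1) L2_nonneg show thesis by (intro that[of "c * L2"]) simp_all
qed

lemma GES_fast_subsystem: "GES (\<lambda>b. f2 a b) (x2s a)"
proof -
  obtain k where k: "k > 0" "\<And>a b v. v \<bullet> (P2 *v (J22 a b *v v)) \<le> - k * (norm v)\<^sup>2"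
    using J22_dissipative by blast
  have "L2-lipschitz_on UNIV (f2 a)"
  proof (rule lipschitz_onI)
    show "dist (f2 a b) (f2 a b') \<le> L2 * dist b b'" for b b'
      using f2_lipschitz_snd[of a b b'] by (simp add: dist_norm)
  qed (rule L2_nonneg)
  then show ?thesis
  proof (rule GES_if_dissipative[where F="f2 a" and xe="x2s a", OF _ x2s_ss P2 k(1)])
    show "(b - x2s a) \<bullet> (P2 *v f2 a b) \<le> - k * (norm (b - x2s a))\<^sup>2" for b
      using f2_dissipative[OF k(2), of b "x2s a" a] x2s_ss by simp
  qed
qed

lemma GES_reduced_system: "GES (\<lambda>a. f1 a (x2s a)) x1s"
proof -
  obtain k where k: "k > 0" "\<And>a. (a - x1s) \<bullet> (P1 *v f1 a (x2s a)) \<le> - k * (norm (a - x1s))\<^sup>2"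
    using reduced_dissipative by blast
  obtain L where L: "0 \<le> L" "\<And>a a'. norm (x2s a - x2s a') \<le> L * norm (a - a')"
    using x2s_lipschitz by blast
  have "(L1 * (1 + L))-lipschitz_on UNIV (\<lambda>a. f1 a (x2s a))"
  proof (rule lipschitz_onI)
    fix a a' :: "real^'n1"
    have "norm (a - a', x2s a - x2s a') \<le> (1 + L) * norm (a - a')"
      using norm_Pair_le[of "a - a'" "x2s a - x2s a'"] L(2)[of a a'] by (simp add: algebra_simps)
    then have "L1 * norm (a - a', x2s a - x2s a') \<le> L1 * ((1 + L) * norm (a - a'))"
      by (rule mult_left_mono[OF _ L1_nonneg])
    then show "dist (f1 a (x2s a)) (f1 a' (x2s a')) \<le> L1 * (1 + L) * dist a a'"
      using f1_lipschitz[of a "x2s a" a' "x2s a'"] by (simp add: dist_norm mult.assoc)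
  qed (use L1_nonneg L in simp)
  then show ?thesis by (rule GES_if_dissipative[OF _ steady P1 k])
qed

definition ps_field :: "(real^'n1) \<times> (real^'n2) \<Rightarrow> (real^'n1) \<times> (real^'n2)" where
  "ps_field = (\<lambda>w. (f1 (fst w) (snd w), f2 (fst w) (snd w) + S (fst w) (snd w) *v f1 (fst w) (snd w)))"

lemma J22_mult_S: "J22 a b ** S a b = - J21 a b"
proof -
  have "J22 a b ** matrix_inv (J22 a b) = mat 1"
    using J22_inv[of a b] unfolding invertible_def matrix_inv_def by (rule someI_ex[THEN conjunct1])
  moreover have "A ** (- B) = - (A ** B)" for A :: "real^'n2^'n2" and B :: "real^'n1^'n2"
    by (simp add: matrix_matrix_mult_def vec_eq_iff sum_negf)
  ultimately show ?thesis by (simp add: S_def matrix_mul_assoc)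
qed

text \<open>The predictive term cancels the drift of the slow variable in the residual \<open>f2\<close>:
  along solutions, \<open>d/dt f2 = J21 f1 + J22 (f2 + S f1) = J22 f2\<close>.\<close>

lemma f2_has_vector_derivative_along_solution:
  assumes "sol_on ps_field T w" "s \<in> {0..T}"
  shows "((\<lambda>t. f2 (fst (w t)) (snd (w t))) has_vector_derivative
      J22 (fst (w s)) (snd (w s)) *v f2 (fst (w s)) (snd (w s))) (at s within {0..T})"
proof -
  obtain a b where ab: "w s = (a, b)" by fastforce
  have "(w has_vector_derivative ps_field (a, b)) (at s within {0..T})"
    using assms unfolding sol_on_def by (metis ab)
  moreover have "((\<lambda>z. f2 (fst z) (snd z)) has_derivative
      (\<lambda>h. J21 a b *v fst h + J22 a b *v snd h)) (at (w s) within w ` {0..T})"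
    using f2_deriv[of a b] ab by (simp add: has_derivative_at_withinI)
  ultimately have "(((\<lambda>z. f2 (fst z) (snd z)) \<circ> w) has_vector_derivative
      (J21 a b *v fst (ps_field (a, b)) + J22 a b *v snd (ps_field (a, b)))) (at s within {0..T})"
    by (rule vector_derivative_diff_chain_within)
  moreover have "J22 a b *v (S a b *v f1 a b) = - (J21 a b *v f1 a b)"
    using J22_mult_S matrix_vector_mult_diff_rdistrib[of 0 "J21 a b"]
    by (simp add: matrix_vector_mul_assoc)
  ultimately show ?thesis
    by (simp add: ab o_def ps_field_def matrix_vector_right_distrib)
qed

definition ps_lyapunov :: "real \<Rightarrow> (real^'n1) \<times> (real^'n2) \<Rightarrow> real" where
  "ps_lyapunov \<kappa> w = (fst w - x1s) \<bullet> (P1 *v (fst w - x1s))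
      + \<kappa> * (f2 (fst w) (snd w) \<bullet> (P2 *v f2 (fst w) (snd w)))"

definition ps_lyapunov_deriv :: "real \<Rightarrow> (real^'n1) \<times> (real^'n2) \<Rightarrow> real" where
  "ps_lyapunov_deriv \<kappa> w = 2 * ((fst w - x1s) \<bullet> (P1 *v f1 (fst w) (snd w)))
      + \<kappa> * (2 * (f2 (fst w) (snd w) \<bullet> (P2 *v (J22 (fst w) (snd w) *v f2 (fst w) (snd w)))))"

lemma ps_lyapunov_has_real_derivative:
  assumes sol: "sol_on ps_field T w" and s: "s \<in> {0..T}"
  shows "((\<lambda>t. ps_lyapunov \<kappa> (w t)) has_real_derivative ps_lyapunov_deriv \<kappa> (w s))
      (at s within {0..T})"
proof -
  have P1s: "transpose P1 = P1" and P2s: "transpose P2 = P2"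
    using P1 P2 by (simp_all add: sym_pos_def_def)
  have "(w has_vector_derivative ps_field (w s)) (at s within {0..T})"
    using sol s by (simp add: sol_on_def)
  from bounded_linear.has_vector_derivative[OF bounded_linear_fst this]
  have "((\<lambda>t. fst (w t)) has_vector_derivative f1 (fst (w s)) (snd (w s))) (at s within {0..T})"
    by (simp add: ps_field_def)
  from has_real_derivative_quadratic_form[OF P1s this, of x1s]
    has_real_derivative_quadratic_form[OF P2s
      f2_has_vector_derivative_along_solution[OF sol s], of 0]
  show ?thesis
    unfolding ps_lyapunov_def ps_lyapunov_deriv_def by (auto intro!: derivative_eq_intros)
qed

lemma ps_lyapunov_le:
  obtains p1 p2 where "p1 > 0" "p2 > 0" "\<And>\<kappa> w. 0 \<le> \<kappa> \<Longrightarrow> ps_lyapunov \<kappa> w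
      \<le> p1 * (norm (fst w - x1s))\<^sup>2 + \<kappa> * (p2 * (norm (f2 (fst w) (snd w)))\<^sup>2)"
proof -
  obtain p1 where p1: "p1 > 0" "\<And>u v. \<bar>u \<bullet> (P1 *v v)\<bar> \<le> p1 * norm u * norm v"
    using bilinear_form_bound by blast
  obtain p2 where p2: "p2 > 0" "\<And>u v. \<bar>u \<bullet> (P2 *v v)\<bar> \<le> p2 * norm u * norm v"
    using bilinear_form_bound by blast
  have "ps_lyapunov \<kappa> w \<le> p1 * (norm (fst w - x1s))\<^sup>2 + \<kappa> * (p2 * (norm (f2 (fst w) (snd w)))\<^sup>2)"
    if \<kappa>: "0 \<le> \<kappa>" for \<kappa> w
  proof -
    have "(fst w - x1s) \<bullet> (P1 *v (fst w - x1s)) \<le> p1 * (norm (fst w - x1s))\<^sup>2"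
      using p1 by (intro quadratic_form_le_if_norm_le) auto
    moreover have "f2 (fst w) (snd w) \<bullet> (P2 *v f2 (fst w) (snd w))
        \<le> p2 * (norm (f2 (fst w) (snd w)))\<^sup>2"
      using p2 by (intro quadratic_form_le_if_norm_le) auto
    ultimately show ?thesis
      unfolding ps_lyapunov_def using \<kappa> by (intro add_mono mult_left_mono)
  qed
  with p1(1) p2(1) show thesis by (rule that)
qed

lemma ps_lyapunov_upper:
  assumes \<kappa>: "0 \<le> \<kappa>"
  obtains \<beta> where "\<And>w. ps_lyapunov \<kappa> w \<le> \<beta> * (norm (w - (x1s, x2s x1s)))\<^sup>2"
proof -
  obtain p1 p2 where p: "p1 > 0" "p2 > 0" "\<And>\<kappa> w. 0 \<le> \<kappa> \<Longrightarrow> ps_lyapunov \<kappa> w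
      \<le> p1 * (norm (fst w - x1s))\<^sup>2 + \<kappa> * (p2 * (norm (f2 (fst w) (snd w)))\<^sup>2)"
    using ps_lyapunov_le by blast
  have "ps_lyapunov \<kappa> w \<le> (p1 + \<kappa> * (p2 * L2\<^sup>2)) * (norm (w - (x1s, x2s x1s)))\<^sup>2" for w
  proof -
    define N where "N = norm (w - (x1s, x2s x1s))"
    have w: "w - (x1s, x2s x1s) = (fst w - x1s, snd w - x2s x1s)" by (simp add: prod_eq_iff)
    have "norm (fst w - x1s) \<le> N"
      using norm_fst_le[of "fst w - x1s" "snd w - x2s x1s"] by (simp add: N_def w)
    then have "p1 * (norm (fst w - x1s))\<^sup>2 \<le> p1 * N\<^sup>2"
      using p(1) by (intro mult_left_mono power_mono) auto
    moreover have "norm (f2 (fst w) (snd w)) \<le> L2 * N"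
      using f2_lipschitz[of "fst w" "snd w" x1s "x2s x1s"] x2s_ss[of x1s] by (simp add: N_def w)
    then have "\<kappa> * (p2 * (norm (f2 (fst w) (snd w)))\<^sup>2) \<le> \<kappa> * (p2 * (L2 * N)\<^sup>2)"
      using p(2) \<kappa> by (intro mult_left_mono power_mono) auto
    ultimately show ?thesis
      using p(3)[OF \<kappa>, of w] by (simp add: N_def algebra_simps power_mult_distrib)
  qed
  then show thesis by (rule that)
qed

lemma distance_to_steady_state_le:
  obtains C where "0 \<le> C"
    "\<And>w. norm (w - (x1s, x2s x1s)) \<le> C * norm (fst w - x1s) + C * norm (f2 (fst w) (snd w))"
proof -
  obtain c where c: "c > 0" "\<And>a b b'. norm (b - b') \<le> c * norm (f2 a b - f2 a b')"
    using f2_inverse_lipschitz by blast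
  obtain L where L: "0 \<le> L" "\<And>a a'. norm (x2s a - x2s a') \<le> L * norm (a - a')"
    using x2s_lipschitz by blast
  define C where "C = 1 + L + c"
  have "norm (w - (x1s, x2s x1s)) \<le> C * norm (fst w - x1s) + C * norm (f2 (fst w) (snd w))" for w
  proof -
    obtain a b where w: "w = (a, b)" by fastforce
    have "norm (w - (x1s, x2s x1s)) \<le> norm (a - x1s) + norm (b - x2s x1s)"
      using norm_Pair_le[of "a - x1s" "b - x2s x1s"] by (simp add: w)
    also have "norm (b - x2s x1s) \<le> norm (b - x2s a) + norm (x2s a - x2s x1s)"
      using norm_triangle_ineq[of "b - x2s a" "x2s a - x2s x1s"] by simp
    also have "norm (b - x2s a) \<le> c * norm (f2 a b)"
      using c(2)[of b "x2s a" a] x2s_ss[of a] by simp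
    also have "norm (x2s a - x2s x1s) \<le> L * norm (a - x1s)" by (rule L(2))
    finally have "norm (w - (x1s, x2s x1s)) \<le> (1 + L) * norm (a - x1s) + c * norm (f2 a b)"
      by (simp add: algebra_simps)
    also have "\<dots> \<le> C * norm (a - x1s) + C * norm (f2 a b)"
      using L(1) c(1) by (intro add_mono mult_right_mono) (auto simp: C_def)
    finally show ?thesis by (simp add: w)
  qed
  with L(1) c(1) show thesis by (intro that[of C]) (simp_all add: C_def)
qed

lemma ps_lyapunov_lower:
  assumes \<kappa>: "0 < \<kappa>"
  obtains \<alpha> where "\<alpha> > 0" "\<And>w. \<alpha> * (norm (w - (x1s, x2s x1s)))\<^sup>2 \<le> ps_lyapunov \<kappa> w"
proof -
  obtain m1 where m1: "m1 > 0" "\<And>v. m1 * (norm v)\<^sup>2 \<le> v \<bullet> (P1 *v v)"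
    using sym_pos_def_quadratic_lower_bound[OF P1] by blast
  obtain m2 where m2: "m2 > 0" "\<And>v. m2 * (norm v)\<^sup>2 \<le> v \<bullet> (P2 *v v)"
    using sym_pos_def_quadratic_lower_bound[OF P2] by blast
  obtain C where C: "0 \<le> C"
    "\<And>w. norm (w - (x1s, x2s x1s)) \<le> C * norm (fst w - x1s) + C * norm (f2 (fst w) (snd w))"
    using distance_to_steady_state_le by blast
  define A1 A2 where "A1 = 2 * C\<^sup>2 / m1" and "A2 = 2 * C\<^sup>2 / (\<kappa> * m2)"
  have A: "0 \<le> A1" "0 \<le> A2" using m1(1) m2(1) \<kappa> by (simp_all add: A1_def A2_def)
  define \<alpha> where "\<alpha> = 1 / (A1 + A2 + 1)"
  have \<alpha>: "\<alpha> > 0" using A by (simp add: \<alpha>_def add_nonneg_pos)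
  have "(norm (w - (x1s, x2s x1s)))\<^sup>2 \<le> (1 / \<alpha>) * ps_lyapunov \<kappa> w" for w
  proof -
    define Z where "Z = norm (fst w - x1s)"
    define Y where "Y = norm (f2 (fst w) (snd w))"
    define V1 where "V1 = (fst w - x1s) \<bullet> (P1 *v (fst w - x1s))"
    define V2 where "V2 = \<kappa> * (f2 (fst w) (snd w) \<bullet> (P2 *v f2 (fst w) (snd w)))"
    have V1: "m1 * Z\<^sup>2 \<le> V1" using m1(2) by (simp add: V1_def Z_def)
    have V2: "\<kappa> * m2 * Y\<^sup>2 \<le> V2"
      using mult_left_mono[OF m2(2), of \<kappa>] \<kappa> by (simp add: V2_def Y_def mult.assoc)
    have "(norm (w - (x1s, x2s x1s)))\<^sup>2 \<le> (C * Z + C * Y)\<^sup>2"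
      using C(2)[of w] by (intro power_mono) (auto simp: Z_def Y_def)
    also have "\<dots> \<le> 2 * C\<^sup>2 * Z\<^sup>2 + 2 * C\<^sup>2 * Y\<^sup>2"
      using zero_le_power2[of "C * Z - C * Y"] by (simp add: power2_eq_square algebra_simps)
    also have "\<dots> \<le> A1 * V1 + A2 * V2"
      using mult_left_mono[OF V1 A(1)] mult_left_mono[OF V2 A(2)] m1(1) m2(1) \<kappa>
      by (simp add: A1_def A2_def)
    also have "\<dots> \<le> (1 / \<alpha>) * (V1 + V2)"
    proof -
      have "0 \<le> V1" using order_trans[OF _ V1] m1(1) by simp
      moreover have "0 \<le> V2" using order_trans[OF _ V2] m2(1) \<kappa> by simp
      moreover have "(1 / \<alpha>) * (V1 + V2) = A1 * V1 + A2 * V2 + (A1 * V2 + A2 * V1 + V1 + V2)"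
        by (simp add: \<alpha>_def algebra_simps)
      ultimately show ?thesis using A by (simp add: add_increasing)
    qed
    finally show ?thesis by (simp add: ps_lyapunov_def V1_def V2_def)
  qed
  with \<alpha> show thesis by (intro that[of \<alpha>]) (simp_all add: field_simps)
qed

lemma ps_lyapunov_deriv_le:
  obtains k1 k2 \<beta> where "k1 > 0" "k2 > 0" "\<And>\<kappa> w. 0 \<le> \<kappa> \<Longrightarrow> ps_lyapunov_deriv \<kappa> w
      \<le> - 2 * k1 * (norm (fst w - x1s))\<^sup>2
        + 2 * \<beta> * norm (fst w - x1s) * norm (f2 (fst w) (snd w))
        - 2 * (\<kappa> * (k2 * (norm (f2 (fst w) (snd w)))\<^sup>2))"
proof -
  obtain k1 where k1: "k1 > 0" "\<And>a. (a - x1s) \<bullet> (P1 *v f1 a (x2s a)) \<le> - k1 * (norm (a - x1s))\<^sup>2"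
    using reduced_dissipative by blast
  obtain k2 where k2: "k2 > 0" "\<And>a b v. v \<bullet> (P2 *v (J22 a b *v v)) \<le> - k2 * (norm v)\<^sup>2"
    using J22_dissipative by blast
  obtain c2 where c2: "c2 > 0" "\<And>a b b'. norm (b - b') \<le> c2 * norm (f2 a b - f2 a b')"
    using f2_inverse_lipschitz by blast
  obtain p1 where p1: "p1 > 0" "\<And>u v. \<bar>u \<bullet> (P1 *v v)\<bar> \<le> p1 * norm u * norm v"
    using bilinear_form_bound by blast
  define \<beta> where "\<beta> = p1 * L1 * c2"
  have "ps_lyapunov_deriv \<kappa> w \<le> - 2 * k1 * (norm (fst w - x1s))\<^sup>2
      + 2 * \<beta> * norm (fst w - x1s) * norm (f2 (fst w) (snd w))
      - 2 * (\<kappa> * (k2 * (norm (f2 (fst w) (snd w)))\<^sup>2))" if \<kappa>: "0 \<le> \<kappa>" for \<kappa> w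
  proof -
    obtain a b where w: "w = (a, b)" by fastforce
    define Z where "Z = norm (a - x1s)"
    define Y where "Y = norm (f2 a b)"
    have "norm (f1 a b - f1 a (x2s a)) \<le> L1 * norm (b - x2s a)"
      using f1_lipschitz[of a b a "x2s a"] by (simp add: norm_Pair)
    also have "\<dots> \<le> L1 * (c2 * Y)"
      using c2(2)[of b "x2s a" a] x2s_ss[of a] L1_nonneg by (intro mult_left_mono) (simp_all add: Y_def)
    finally have f1_diff: "norm (f1 a b - f1 a (x2s a)) \<le> L1 * (c2 * Y)" .
    have "(a - x1s) \<bullet> (P1 *v (f1 a b - f1 a (x2s a))) \<le> p1 * Z * norm (f1 a b - f1 a (x2s a))"
      using abs_le_D1[OF p1(2)] by (simp add: Z_def)
    also have "\<dots> \<le> p1 * Z * (L1 * (c2 * Y))"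
      using p1(1) by (intro mult_left_mono f1_diff) (simp add: Z_def)
    finally have cross: "(a - x1s) \<bullet> (P1 *v (f1 a b - f1 a (x2s a))) \<le> \<beta> * Z * Y"
      by (simp add: \<beta>_def ac_simps)
    have "\<kappa> * (f2 a b \<bullet> (P2 *v (J22 a b *v f2 a b))) \<le> \<kappa> * (- k2 * Y\<^sup>2)"
      using \<kappa> k2(2) by (intro mult_left_mono) (simp_all add: Y_def)
    moreover have "ps_lyapunov_deriv \<kappa> w = 2 * ((a - x1s) \<bullet> (P1 *v f1 a (x2s a)))
        + 2 * ((a - x1s) \<bullet> (P1 *v (f1 a b - f1 a (x2s a))))
        + 2 * (\<kappa> * (f2 a b \<bullet> (P2 *v (J22 a b *v f2 a b))))"
      by (simp add: ps_lyapunov_deriv_def w matrix_vector_mult_diff_distrib inner_diff_right)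
    ultimately show ?thesis
      using k1(2)[of a] cross by (simp add: w Z_def Y_def)
  qed
  with k1(1) k2(1) show thesis by (rule that)
qed

lemma ps_lyapunov_decrease:
  obtains \<kappa> c where "\<kappa> > 0" "c > 0" "\<And>w. ps_lyapunov_deriv \<kappa> w \<le> - c * ps_lyapunov \<kappa> w"
proof -
  obtain k1 k2 \<beta> where k: "k1 > 0" "k2 > 0" "\<And>\<kappa> w. 0 \<le> \<kappa> \<Longrightarrow> ps_lyapunov_deriv \<kappa> w
      \<le> - 2 * k1 * (norm (fst w - x1s))\<^sup>2
        + 2 * \<beta> * norm (fst w - x1s) * norm (f2 (fst w) (snd w))
        - 2 * (\<kappa> * (k2 * (norm (f2 (fst w) (snd w)))\<^sup>2))"
    using ps_lyapunov_deriv_le by blast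
  obtain p1 p2 where p: "p1 > 0" "p2 > 0" "\<And>\<kappa> w. 0 \<le> \<kappa> \<Longrightarrow> ps_lyapunov \<kappa> w
      \<le> p1 * (norm (fst w - x1s))\<^sup>2 + \<kappa> * (p2 * (norm (f2 (fst w) (snd w)))\<^sup>2)"
    using ps_lyapunov_le by blast
  define \<kappa> where "\<kappa> = (\<beta>\<^sup>2 / k1 + 1) / k2"
  define c where "c = min (k1 / p1) (k2 / p2)"
  have \<kappa>: "\<kappa> > 0" using k(1,2) by (simp add: \<kappa>_def add_nonneg_pos)
  have c: "c > 0" using k(1,2) p(1,2) by (simp add: c_def)
  have cp: "c * p1 \<le> k1" "c * p2 \<le> k2"
    using p(1,2) by (simp_all add: c_def min_le_iff_disj flip: pos_le_divide_eq)
  show thesis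
  proof (rule that[OF \<kappa> c])
    fix w :: "(real^'n1) \<times> (real^'n2)"
    define Z where "Z = norm (fst w - x1s)"
    define Y where "Y = norm (f2 (fst w) (snd w))"
    have "ps_lyapunov_deriv \<kappa> w \<le> - 2 * k1 * Z\<^sup>2 + 2 * \<beta> * Z * Y - 2 * (\<kappa> * (k2 * Y\<^sup>2))"
      using k(3)[of \<kappa> w] \<kappa> by (simp add: Z_def Y_def)
    also have "\<dots> \<le> - k1 * Z\<^sup>2 - \<kappa> * (k2 * Y\<^sup>2)"
    proof -
      have "2 * \<beta> * Z * Y \<le> k1 * Z\<^sup>2 + (\<beta> * Y)\<^sup>2 / k1"
        using two_mult_le_weighted_squares[OF k(1), of Z "\<beta> * Y"] by (simp add: ac_simps)
      moreover have "\<kappa> * (k2 * Y\<^sup>2) = (\<beta> * Y)\<^sup>2 / k1 + Y\<^sup>2"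
        using k(2) by (simp add: \<kappa>_def field_simps power_mult_distrib)
      ultimately show ?thesis using zero_le_power2[of Y] by linarith
    qed
    also have "\<dots> \<le> - c * (p1 * Z\<^sup>2 + \<kappa> * (p2 * Y\<^sup>2))"
    proof -
      have "c * p1 * Z\<^sup>2 \<le> k1 * Z\<^sup>2" using cp(1) by (rule mult_right_mono) simp
      moreover have "\<kappa> * (c * p2 * Y\<^sup>2) \<le> \<kappa> * (k2 * Y\<^sup>2)"
        using cp(2) \<kappa> by (intro mult_left_mono mult_right_mono) auto
      ultimately show ?thesis by (simp add: algebra_simps)
    qed
    also have "\<dots> \<le> - c * ps_lyapunov \<kappa> w"
      using p(3)[of \<kappa> w] \<kappa> c by (simp add: Z_def Y_def)
    finally show "ps_lyapunov_deriv \<kappa> w \<le> - c * ps_lyapunov \<kappa> w" .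
  qed
qed

lemma GES_predictive_sensitivity: "GES ps_field (x1s, x2s x1s)"
proof -
  obtain \<kappa> c where \<kappa>: "\<kappa> > 0" and c: "c > 0"
    and decrease: "\<And>w. ps_lyapunov_deriv \<kappa> w \<le> - c * ps_lyapunov \<kappa> w"
    using ps_lyapunov_decrease by blast
  obtain \<alpha> where \<alpha>: "\<alpha> > 0" "\<And>w. \<alpha> * (norm (w - (x1s, x2s x1s)))\<^sup>2 \<le> ps_lyapunov \<kappa> w"
    using ps_lyapunov_lower[OF \<kappa>] by blast
  obtain \<beta> where \<beta>: "\<And>w. ps_lyapunov \<kappa> w \<le> \<beta> * (norm (w - (x1s, x2s x1s)))\<^sup>2"
    using ps_lyapunov_upper \<kappa> by (meson less_imp_le)
  have "ps_field (x1s, x2s x1s) = 0"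
    using steady x2s_ss[of x1s] by (simp add: ps_field_def zero_prod_def)
  moreover have "\<forall>z. \<exists>e>0. \<exists>L. L-lipschitz_on (ball z e) ps_field"
    using ps_loc_lip by (simp add: ps_field_def)
  ultimately show ?thesis
    using \<alpha> \<beta> c decrease ps_lyapunov_has_real_derivative
    by (intro GES_if_quadratic_Lyapunov[where V="ps_lyapunov \<kappa>" and V'="ps_lyapunov_deriv \<kappa>"
          and a=\<alpha> and b=\<beta> and c=c]) auto
qed

end

theorem proposition3:
  fixes f1 :: "real^'n1 \<Rightarrow> real^'n2 \<Rightarrow> real^'n1"
    and f2 :: "real^'n1 \<Rightarrow> real^'n2 \<Rightarrow> real^'n2"
    and J11 :: "real^'n1 \<Rightarrow> real^'n2 \<Rightarrow> real^'n1^'n1"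
    and J12 :: "real^'n1 \<Rightarrow> real^'n2 \<Rightarrow> real^'n2^'n1"
    and J21 :: "real^'n1 \<Rightarrow> real^'n2 \<Rightarrow> real^'n1^'n2"
    and J22 :: "real^'n1 \<Rightarrow> real^'n2 \<Rightarrow> real^'n2^'n2"
    and S :: "real^'n1 \<Rightarrow> real^'n2 \<Rightarrow> real^'n1^'n2"
    and x2s :: "real^'n1 \<Rightarrow> real^'n2"
    and Dx2s :: "real^'n1 \<Rightarrow> real^'n1^'n2"
    and x1s :: "real^'n1"
    and P1 Q1 :: "real^'n1^'n1"
    and P2 Q2 :: "real^'n2^'n2"
  assumes f1_deriv: "\<And>a b. ((\<lambda>z. f1 (fst z) (snd z)) has_derivative
              (\<lambda>h. J11 a b *v fst h + J12 a b *v snd h)) (at (a, b))"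
    and f2_deriv: "\<And>a b. ((\<lambda>z. f2 (fst z) (snd z)) has_derivative
              (\<lambda>h. J21 a b *v fst h + J22 a b *v snd h)) (at (a, b))"
    and J_cont: "continuous_on UNIV (\<lambda>z. J11 (fst z) (snd z))"
       "continuous_on UNIV (\<lambda>z. J12 (fst z) (snd z))"
       "continuous_on UNIV (\<lambda>z. J21 (fst z) (snd z))"
       "continuous_on UNIV (\<lambda>z. J22 (fst z) (snd z))"
    and J22_inv: "\<And>a b. invertible (J22 a b)"
    and S_def: "\<And>a b. S a b = - (matrix_inv (J22 a b) ** J21 a b)"
    and ps_loc_lip: "\<forall>z. \<exists>e>0. \<exists>L. L-lipschitz_on (ball z e)
          (\<lambda>w. (f1 (fst w) (snd w), f2 (fst w) (snd w) + S (fst w) (snd w) *v f1 (fst w) (snd w)))"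
    and x2s_deriv: "\<And>a. (x2s has_derivative (\<lambda>h. Dx2s a *v h)) (at a)"
    and x2s_cont: "continuous_on UNIV Dx2s"
    and x2s_ss: "\<And>a. f2 a (x2s a) = 0"
    and steady: "f1 x1s (x2s x1s) = 0"
    and f1_lip: "\<exists>L. L-lipschitz_on UNIV (\<lambda>z. f1 (fst z) (snd z))"
    and f2_lip: "\<exists>L. L-lipschitz_on UNIV (\<lambda>z. f2 (fst z) (snd z))"
    and P1: "sym_pos_def P1" and Q1: "sym_pos_def Q1"
    and P2: "sym_pos_def P2" and Q2: "sym_pos_def Q2"
    and LMI1: "\<And>a. mat_le
        (P1 ** (J11 a (x2s a) + J12 a (x2s a) ** Dx2s a)
         + transpose (J11 a (x2s a) + J12 a (x2s a) ** Dx2s a) ** P1) (- Q1)"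
    and LMI2: "\<And>a b. mat_le (P2 ** J22 a b + transpose (J22 a b) ** P2) (- Q2)"
  shows "GES (\<lambda>w. (f1 (fst w) (snd w), f2 (fst w) (snd w) + S (fst w) (snd w) *v f1 (fst w) (snd w)))
             (x1s, x2s x1s)
       \<and> GES (\<lambda>a. f1 a (x2s a)) x1s
       \<and> (\<forall>a. GES (\<lambda>b. f2 a b) (x2s a))"
proof -
  obtain L1 where L1: "L1-lipschitz_on UNIV (\<lambda>z. f1 (fst z) (snd z))" using f1_lip by blast
  obtain L2 where L2: "L2-lipschitz_on UNIV (\<lambda>z. f2 (fst z) (snd z))" using f2_lip by blast
  interpret predictive_sensitivity f1 f2 J11 J12 J21 J22 S x2s Dx2s x1s P1 Q1 P2 Q2 L1 L2
    using assms L1 L2 by unfold_locales blast+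
  show ?thesis
    using GES_predictive_sensitivity GES_reduced_system GES_fast_subsystem
    unfolding ps_field_def by blast
qed

end
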